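(* Let $d\ge 1$, let $\Omega=\operatorname{diag}(\omega_j)_{j=1}^d\in\mathbb{R}^{d\times d}$ with all $\omega_j\ge 0$, let $\omega=\min_{j:\,\omega_j>0}\omega_j$ be the smallest nonzero frequency, and let $A\in\mathbb{C}^{d\times d}$ be self-adjoint. Let $0<h\le 1$ and let $\psi_1,\phi\colon\mathbb{R}\to\mathbb{R}$ be even functions such that $\psi_1(\xi)=\operatorname{sinc}(\xi)\phi(\xi)$ for all $\xi\in\mathbb{R}$ and, for constants $c_0,c_1\ge 0$, \[ |\psi_1(\xi)|\le c_0,\qquad |\phi(\xi)|\le c_0,\qquad |\phi(\xi)-1|\le c_1|\xi|\qquad\text{for all }\xi\in\mathbb{R}. \] Set $\Psi_1=\psi_1(h\Omega)$, $\Phi=\phi(h\Omega)$. For given $q_0,\dot q_0\in\mathbb{C}^d$, define $(q_n,\dot q_n)_{n\ge 0}$ recursively by \begin{align*} q_{n+1} &= \cos(h\Omega) q_n + h\operatorname{sinc}(h\Omega) \dot{q}_n - \tfrac12 h^2 \operatorname{sinc}(h\Omega) \Psi_1 A\Phi q_n,\\ \dot{q}_{n+1} &= -\Omega \sin(h\Omega) q_n + \cos(h\Omega) \dot{q}_n - \tfrac12 h \big( \cos(h\Omega) \Psi_1 A\Phi q_n + \Psi_1 A\Phi q_{n+1}\big), \end{align*} and let $H(q,\dot q)=\tfrac12 \|\Omega q\|^2 + \tfrac12 \|\dot{q}\|^2 + \tfrac12 q^*Aq$. Then \[ \big|H(q_n,\dot{q}_n) - H(q_0,\dot{q}_0)\big|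 \le C \min\big(h,\omega^{-1}\big) + C h^2 \qquad\text{for all } n\in\mathbb{N}, \] with a constant $C$ depending only on $c_0$, $c_1$, $\|A\|$, $\|q_0\|$, $\|\Omega q_0\|$, $\|\dot{q}_0\|$ and $\|q_n\|$.
   Context: $\|\cdot\|$ is the Euclidean norm on $\mathbb{C}^d$ and, for matrices, the induced operator norm; ${}^*$ denotes conjugate transpose. $\operatorname{sinc}(\xi)=\sin(\xi)/\xi$ for $\xi\ne0$ and $\operatorname{sinc}(0)=1$. For a function $f\colon\mathbb{R}\to\mathbb{R}$, $f(h\Omega)$ denotes the diagonal matrix $\operatorname{diag}(f(h\omega_j))_{j=1}^d$. *)

theory Defs
  imports "HOL-Analysis.Analysis"
begin

text \<open>Dimension d is a natural number; vectors in C^d are functions nat => complex,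
  of which only the components j < d are relevant; d x d matrices are functions
  nat => nat => complex with only entries i,j < d relevant.
  The diagonal matrix Omega is given by its diagonal omega :: nat => real.\<close>

definition sinc :: "real \<Rightarrow> real" where
  "sinc \<xi> = (if \<xi> = 0 then 1 else sin \<xi> / \<xi>)"

definition vnorm :: "nat \<Rightarrow> (nat \<Rightarrow> complex) \<Rightarrow> real" where
  "vnorm d x = sqrt (\<Sum>j<d. (cmod (x j))\<^sup>2)"

definition mvec :: "nat \<Rightarrow> (nat \<Rightarrow> nat \<Rightarrow> complex) \<Rightarrow> (nat \<Rightarrow> complex) \<Rightarrow> (nat \<Rightarrow> complex)" where
  "mvec d A x = (\<lambda>i. \<Sum>j<d. A i j * x j)"

definition opnorm :: "nat \<Rightarrow> (nat \<Rightarrow> nat \<Rightarrow> complex) \<Rightarrow> real" where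
  "opnorm d A = Sup {vnorm d (mvec d A x) | x. vnorm d x \<le> 1}"

definition self_adjoint :: "nat \<Rightarrow> (nat \<Rightarrow> nat \<Rightarrow> complex) \<Rightarrow> bool" where
  "self_adjoint d A \<longleftrightarrow> (\<forall>i<d. \<forall>j<d. A i j = cnj (A j i))"

text \<open>Diagonal matrix f(h Omega) applied to a vector.\<close>
definition dmul :: "(real \<Rightarrow> real) \<Rightarrow> real \<Rightarrow> (nat \<Rightarrow> real) \<Rightarrow> (nat \<Rightarrow> complex) \<Rightarrow> (nat \<Rightarrow> complex)" where
  "dmul f h \<omega> x = (\<lambda>i. complex_of_real (f (h * \<omega> i)) * x i)"

definition Omul :: "(nat \<Rightarrow> real) \<Rightarrow> (nat \<Rightarrow> complex) \<Rightarrow> (nat \<Rightarrow> complex)" where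
  "Omul \<omega> x = (\<lambda>i. complex_of_real (\<omega> i) * x i)"

definition force :: "nat \<Rightarrow> (nat \<Rightarrow> real) \<Rightarrow> (nat \<Rightarrow> nat \<Rightarrow> complex) \<Rightarrow> real \<Rightarrow>
    (real \<Rightarrow> real) \<Rightarrow> (real \<Rightarrow> real) \<Rightarrow> (nat \<Rightarrow> complex) \<Rightarrow> (nat \<Rightarrow> complex)" where
  "force d \<omega> A h \<psi>1 \<phi> q = dmul \<psi>1 h \<omega> (mvec d A (dmul \<phi> h \<omega> q))"

fun traj :: "nat \<Rightarrow> (nat \<Rightarrow> real) \<Rightarrow> (nat \<Rightarrow> nat \<Rightarrow> complex) \<Rightarrow> real \<Rightarrow>
    (real \<Rightarrow> real) \<Rightarrow> (real \<Rightarrow> real) \<Rightarrow> (nat \<Rightarrow> complex) \<Rightarrow> (nat \<Rightarrow> complex) \<Rightarrow> nat \<Rightarrow>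
    (nat \<Rightarrow> complex) \<times> (nat \<Rightarrow> complex)" where
  "traj d \<omega> A h \<psi>1 \<phi> q0 p0 0 = (q0, p0)"
| "traj d \<omega> A h \<psi>1 \<phi> q0 p0 (Suc n) =
     (let (q, p) = traj d \<omega> A h \<psi>1 \<phi> q0 p0 n;
          F = force d \<omega> A h \<psi>1 \<phi>;
          q' = (\<lambda>i. dmul cos h \<omega> q i + complex_of_real h * dmul sinc h \<omega> p i
                    - complex_of_real (h\<^sup>2 / 2) * dmul sinc h \<omega> (F q) i);
          p' = (\<lambda>i. - Omul \<omega> (dmul sin h \<omega> q) i + dmul cos h \<omega> p i
                    - complex_of_real (h / 2) * (dmul cos h \<omega> (F q) i + F q' i))
      in (q', p'))"

definition energy :: "nat \<Rightarrow> (nat \<Rightarrow> real) \<Rightarrow> (nat \<Rightarrow> nat \<Rightarrow> complex) \<Rightarrow>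
    (nat \<Rightarrow> complex) \<Rightarrow> (nat \<Rightarrow> complex) \<Rightarrow> complex" where
  "energy d \<omega> A q p = complex_of_real ((vnorm d (Omul \<omega> q))\<^sup>2 / 2 + (vnorm d p)\<^sup>2 / 2)
     + (\<Sum>i<d. \<Sum>j<d. cnj (q i) * A i j * q j) / 2"

text \<open>omega^{-1} for the smallest nonzero frequency; if there is no nonzero
  frequency, omega = infinity and omega^{-1} = 0.\<close>
definition inv_min_freq :: "nat \<Rightarrow> (nat \<Rightarrow> real) \<Rightarrow> real" where
  "inv_min_freq d \<omega> = (if \<exists>j<d. \<omega> j > 0
      then 1 / Min {\<omega> j | j. j < d \<and> \<omega> j > 0} else 0)"

end

theory Submission
  imports Defs
begin

(* The scheme conserves exactly the modified energy
     H*(q, p) = |p|^2/2 + |Omega q|^2/2 + Re <q, cos(h Omega) Phi A Phi q>/2 - h^2/8 |Psi1 A Phi q|^2.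
   With P = p - h/2 Psi1 A Phi q a step is a half kick, the exact flow (q, P) -> (q', P') of
   q'' = -Omega^2 q over time h, and another half kick.  Since Psi1 = sinc(h Omega) Phi and
   cos(h Omega) q' - h sinc(h Omega) P' = q, both H*(q, p) and H*(q', p') reduce to the oscillator
   energy (|P|^2 + |Omega q|^2)/2 resp. (|P'|^2 + |Omega q'|^2)/2 plus the same term
   Re <q, Phi A Phi q'>/2, and the oscillator energy is invariant under the flow.
   In H - H* the potential terms differ by multiplication with 1 - phi(xi) cos xi and 1 - phi(xi),
   xi = h omega_j, which are O(min(xi, 1)); as min(h omega_j, 1) <= min(h, 1/omega) omega_j this costs
   O(min(h, 1/omega) |q| |Omega q|), while the remaining term is O(h^2 |q|^2).  Conservation of H*
   in turn bounds |Omega q_n| by the initial data and |q_n|. *)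

section \<open>Inner product and norms on C^d\<close>

definition cinner :: "nat \<Rightarrow> (nat \<Rightarrow> complex) \<Rightarrow> (nat \<Rightarrow> complex) \<Rightarrow> complex" where
  "cinner d x y = (\<Sum>j<d. cnj (x j) * y j)"

definition rinner :: "nat \<Rightarrow> (nat \<Rightarrow> complex) \<Rightarrow> (nat \<Rightarrow> complex) \<Rightarrow> real" where
  "rinner d x y = Re (cinner d x y)"

lemma cinner_commute: "cinner d y x = cnj (cinner d x y)"
  unfolding cinner_def by (simp add: mult.commute)

lemma rinner_commute: "rinner d y x = rinner d x y"
  unfolding rinner_def by (subst cinner_commute) simp

lemma rinner_add_left: "rinner d (\<lambda>i. x i + y i) z = rinner d x z + rinner d y z"
  unfolding rinner_def cinner_def by (simp add: distrib_right sum.distrib)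

lemma rinner_add_right: "rinner d x (\<lambda>i. y i + z i) = rinner d x y + rinner d x z"
  unfolding rinner_def cinner_def by (simp add: distrib_left sum.distrib)

lemma rinner_diff_left: "rinner d (\<lambda>i. x i - y i) z = rinner d x z - rinner d y z"
  unfolding rinner_def cinner_def by (simp add: left_diff_distrib sum_subtractf)

lemma rinner_diff_right: "rinner d x (\<lambda>i. y i - z i) = rinner d x y - rinner d x z"
  unfolding rinner_def cinner_def by (simp add: right_diff_distrib sum_subtractf)

lemma rinner_scale_left: "rinner d (\<lambda>i. of_real a * x i) y = a * rinner d x y"
  unfolding rinner_def cinner_def by (simp add: sum_distrib_left algebra_simps)

lemma rinner_scale_right: "rinner d x (\<lambda>i. of_real a * y i) = a * rinner d x y"
  unfolding rinner_def cinner_def by (simp add: sum_distrib_left algebra_simps)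

lemma rinner_dmul: "rinner d (dmul f h \<omega> x) y = rinner d x (dmul f h \<omega> y)"
  unfolding rinner_def cinner_def dmul_def by (simp add: algebra_simps)

lemma cinner_mvec:
  assumes "self_adjoint d A"
  shows "cinner d x (mvec d A y) = cinner d (mvec d A x) y"
proof -
  have "cinner d x (mvec d A y) = (\<Sum>i<d. \<Sum>j<d. cnj (x i) * A i j * y j)"
    by (simp add: cinner_def mvec_def sum_distrib_left mult.assoc)
  also have "\<dots> = (\<Sum>j<d. \<Sum>i<d. cnj (x i) * A i j * y j)"
    by (rule sum.swap)
  also have "\<dots> = (\<Sum>j<d. \<Sum>i<d. cnj (A j i * x i) * y j)"
  proof (intro sum.cong refl)
    fix j i assume "j \<in> {..<d}" "i \<in> {..<d}"
    then have "A i j = cnj (A j i)" using assms unfolding self_adjoint_def by blast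
    then show "cnj (x i) * A i j * y j = cnj (A j i * x i) * y j" by (simp add: ac_simps)
  qed
  also have "\<dots> = cinner d (mvec d A x) y"
    by (simp add: cinner_def mvec_def sum_distrib_right)
  finally show ?thesis .
qed

lemma vnorm_nonneg: "0 \<le> vnorm d x"
  unfolding vnorm_def by (simp add: sum_nonneg)

lemma vnorm_square: "(vnorm d x)\<^sup>2 = (\<Sum>j<d. (cmod (x j))\<^sup>2)"
  unfolding vnorm_def by (simp add: sum_nonneg)

lemma vnorm_square_rinner: "(vnorm d x)\<^sup>2 = rinner d x x"
proof -
  have "Re (cnj z * z) = (cmod z)\<^sup>2" for z
    using cmod_power2[of z] by (simp add: power2_eq_square)
  then show ?thesis unfolding vnorm_square rinner_def cinner_def Re_sum by simp
qed

lemma cinner_Cauchy_Schwarz: "cmod (cinner d x y) \<le> vnorm d x * vnorm d y"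
proof -
  have "cmod (cinner d x y) \<le> (\<Sum>j<d. cmod (x j) * cmod (y j))"
    unfolding cinner_def using norm_sum[of "\<lambda>j. cnj (x j) * y j" "{..<d}"] by (simp add: norm_mult)
  also have "\<dots> \<le> sqrt ((\<Sum>j<d. cmod (x j) * cmod (y j))\<^sup>2)" by simp
  also have "\<dots> \<le> sqrt ((\<Sum>j<d. (cmod (x j))\<^sup>2) * (\<Sum>j<d. (cmod (y j))\<^sup>2))"
    by (rule real_sqrt_le_mono, rule Cauchy_Schwarz_ineq_sum)
  also have "\<dots> = vnorm d x * vnorm d y" unfolding vnorm_def real_sqrt_mult ..
  finally show ?thesis .
qed

lemma rinner_Cauchy_Schwarz: "\<bar>rinner d x y\<bar> \<le> vnorm d x * vnorm d y"
  unfolding rinner_def using abs_Re_le_cmod cinner_Cauchy_Schwarz order_trans by blast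

lemma vnorm_le_pointwise:
  assumes "\<And>i. i < d \<Longrightarrow> cmod (x i) \<le> k * cmod (y i)" and "0 \<le> k"
  shows "vnorm d x \<le> k * vnorm d y"
proof -
  have "(\<Sum>j<d. (cmod (x j))\<^sup>2) \<le> (\<Sum>j<d. k\<^sup>2 * (cmod (y j))\<^sup>2)"
  proof (rule sum_mono)
    fix j assume "j \<in> {..<d}"
    then have "(cmod (x j))\<^sup>2 \<le> (k * cmod (y j))\<^sup>2" using assms by (intro power_mono) auto
    then show "(cmod (x j))\<^sup>2 \<le> k\<^sup>2 * (cmod (y j))\<^sup>2" by (simp add: power_mult_distrib)
  qed
  then have "vnorm d x \<le> sqrt (k\<^sup>2 * (\<Sum>j<d. (cmod (y j))\<^sup>2))"
    unfolding vnorm_def by (simp add: sum_distrib_left)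
  also have "\<dots> = k * vnorm d y" unfolding vnorm_def real_sqrt_mult using assms(2) by simp
  finally show ?thesis .
qed

lemma vnorm_dmul_le:
  assumes "\<And>\<xi>. \<bar>f \<xi>\<bar> \<le> c"
  shows "vnorm d (dmul f h \<omega> x) \<le> c * vnorm d x"
proof (rule vnorm_le_pointwise)
  show "0 \<le> c" using assms[of 0] by linarith
  fix i show "cmod (dmul f h \<omega> x i) \<le> c * cmod (x i)"
    unfolding dmul_def norm_mult using assms[of "h * \<omega> i"] by (simp add: mult_right_mono)
qed

lemma vnorm_scale: "vnorm d (\<lambda>i. c * x i) = cmod c * vnorm d x"
proof -
  have "vnorm d (\<lambda>i. c * x i) = sqrt ((cmod c)\<^sup>2 * (\<Sum>j<d. (cmod (x j))\<^sup>2))"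
    unfolding vnorm_def by (simp add: norm_mult power_mult_distrib sum_distrib_left)
  then show ?thesis unfolding vnorm_def real_sqrt_mult by simp
qed

lemma mvec_scale: "mvec d A (\<lambda>j. c * x j) = (\<lambda>i. c * mvec d A x i)"
  unfolding mvec_def by (simp add: sum_distrib_left algebra_simps)

lemma mvec_diff: "mvec d A (\<lambda>j. x j - y j) = (\<lambda>i. mvec d A x i - mvec d A y i)"
  unfolding mvec_def by (simp add: sum_subtractf algebra_simps)

lemma mvec_bounded: "\<exists>M. \<forall>x. vnorm d (mvec d A x) \<le> M * vnorm d x"
proof (intro exI allI)
  fix x
  define row where "row i = (\<lambda>j. cnj (A i j))" for i
  have "cmod (mvec d A x i) \<le> vnorm d (row i) * vnorm d x" for i
    using cinner_Cauchy_Schwarz[of d "row i" x] by (simp add: row_def cinner_def mvec_def)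
  then have "(\<Sum>i<d. (cmod (mvec d A x i))\<^sup>2) \<le> (\<Sum>i<d. (vnorm d (row i))\<^sup>2 * (vnorm d x)\<^sup>2)"
    by (intro sum_mono) (metis norm_ge_zero power_mono power_mult_distrib)
  then have "vnorm d (mvec d A x) \<le> sqrt ((\<Sum>i<d. (vnorm d (row i))\<^sup>2) * (vnorm d x)\<^sup>2)"
    unfolding vnorm_def[of d "mvec d A x"] by (simp add: sum_distrib_right)
  then show "vnorm d (mvec d A x) \<le> sqrt (\<Sum>i<d. (vnorm d (row i))\<^sup>2) * vnorm d x"
    by (simp add: real_sqrt_mult vnorm_nonneg)
qed

lemma bdd_above_opnorm: "bdd_above {vnorm d (mvec d A x) | x. vnorm d x \<le> 1}"
proof -
  obtain M where M: "\<And>x. vnorm d (mvec d A x) \<le> M * vnorm d x" using mvec_bounded by blast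
  have "vnorm d (mvec d A x) \<le> max M 0" if "vnorm d x \<le> 1" for x
  proof -
    have "M * vnorm d x \<le> max M 0 * vnorm d x" by (intro mult_right_mono vnorm_nonneg) simp
    also have "\<dots> \<le> max M 0" using that vnorm_nonneg[of d x] by (intro mult_left_le) auto
    finally show ?thesis using M[of x] by linarith
  qed
  then show ?thesis by (intro bdd_aboveI[where M = "max M 0"]) blast
qed

lemma vnorm_mvec_le_opnorm_unit: "vnorm d x \<le> 1 \<Longrightarrow> vnorm d (mvec d A x) \<le> opnorm d A"
  unfolding opnorm_def by (rule cSup_upper[OF _ bdd_above_opnorm]) auto

lemma opnorm_nonneg: "0 \<le> opnorm d A"
proof -
  have "vnorm d (\<lambda>i. 0) \<le> 1" by (simp add: vnorm_def)
  then show ?thesis by (rule order_trans[OF vnorm_nonneg vnorm_mvec_le_opnorm_unit])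
qed

lemma vnorm_mvec_le_opnorm: "vnorm d (mvec d A x) \<le> opnorm d A * vnorm d x"
proof (cases "vnorm d x = 0")
  case True
  obtain M where "vnorm d (mvec d A x) \<le> M * vnorm d x" using mvec_bounded by blast
  then show ?thesis using True vnorm_nonneg[of d "mvec d A x"] by simp
next
  case False
  then have pos: "vnorm d x > 0" using vnorm_nonneg[of d x] by simp
  let ?c = "of_real (1 / vnorm d x)"
  have "vnorm d (\<lambda>i. ?c * x i) = 1" unfolding vnorm_scale using pos by (simp add: norm_divide)
  then have "vnorm d (mvec d A (\<lambda>i. ?c * x i)) \<le> opnorm d A" by (intro vnorm_mvec_le_opnorm_unit) simp
  then have "vnorm d (mvec d A x) / vnorm d x \<le> opnorm d A"
    unfolding mvec_scale vnorm_scale using pos by (simp add: norm_divide)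
  then show ?thesis using pos by (simp add: divide_le_eq mult.commute)
qed

lemma abs_rinner_mvec_le: "\<bar>rinner d x (mvec d A y)\<bar> \<le> vnorm d x * (opnorm d A * vnorm d y)"
  using rinner_Cauchy_Schwarz[of d x "mvec d A y"]
  by (rule order_trans) (intro mult_left_mono vnorm_mvec_le_opnorm vnorm_nonneg)

lemma vnorm_dmul_mvec_dmul_le:
  assumes "\<And>\<xi>. \<bar>f \<xi>\<bar> \<le> a" and "\<And>\<xi>. \<bar>g \<xi>\<bar> \<le> b"
  shows "vnorm d (dmul f h \<omega> (mvec d A (dmul g h \<omega> x))) \<le> a * opnorm d A * b * vnorm d x"
proof -
  have a: "0 \<le> a" using assms(1)[of 0] by linarith
  have "vnorm d (dmul f h \<omega> (mvec d A (dmul g h \<omega> x))) \<le> a * vnorm d (mvec d A (dmul g h \<omega> x))"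
    using assms(1) by (rule vnorm_dmul_le)
  also have "\<dots> \<le> a * (opnorm d A * vnorm d (dmul g h \<omega> x))"
    using a by (intro mult_left_mono vnorm_mvec_le_opnorm)
  also have "\<dots> \<le> a * (opnorm d A * (b * vnorm d x))"
    using a assms(2) by (intro mult_left_mono opnorm_nonneg vnorm_dmul_le)
  finally show ?thesis by (simp add: mult.assoc)
qed

section \<open>The modified energy\<close>

definition filtered_op :: "nat \<Rightarrow> (nat \<Rightarrow> real) \<Rightarrow> (nat \<Rightarrow> nat \<Rightarrow> complex) \<Rightarrow> real \<Rightarrow>
    (real \<Rightarrow> real) \<Rightarrow> (nat \<Rightarrow> complex) \<Rightarrow> (nat \<Rightarrow> complex)" where
  "filtered_op d \<omega> A h \<phi> x = dmul \<phi> h \<omega> (mvec d A (dmul \<phi> h \<omega> x))"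

lemma rinner_filtered_op:
  assumes "self_adjoint d A"
  shows "rinner d x (filtered_op d \<omega> A h \<phi> y) = rinner d (filtered_op d \<omega> A h \<phi> x) y"
proof -
  have "rinner d x (filtered_op d \<omega> A h \<phi> y) = rinner d (dmul \<phi> h \<omega> x) (mvec d A (dmul \<phi> h \<omega> y))"
    unfolding filtered_op_def rinner_dmul ..
  also have "\<dots> = rinner d (mvec d A (dmul \<phi> h \<omega> x)) (dmul \<phi> h \<omega> y)"
    unfolding rinner_def cinner_mvec[OF assms] ..
  also have "\<dots> = rinner d (filtered_op d \<omega> A h \<phi> x) y"
    unfolding filtered_op_def rinner_dmul ..
  finally show ?thesis .
qed

lemma filtered_op_add:
  "filtered_op d \<omega> A h \<phi> (\<lambda>i. x i + y i) = (\<lambda>i. filtered_op d \<omega> A h \<phi> x i + filtered_op d \<omega> A h \<phi> y i)"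
  unfolding filtered_op_def dmul_def mvec_def by (simp add: algebra_simps sum.distrib)

lemma force_eq_dmul_sinc:
  assumes "\<forall>\<xi>. \<psi>1 \<xi> = sinc \<xi> * \<phi> \<xi>"
  shows "force d \<omega> A h \<psi>1 \<phi> x = dmul sinc h \<omega> (filtered_op d \<omega> A h \<phi> x)"
  using assms unfolding force_def filtered_op_def dmul_def by (simp add: fun_eq_iff)

definition modified_energy :: "nat \<Rightarrow> (nat \<Rightarrow> real) \<Rightarrow> (nat \<Rightarrow> nat \<Rightarrow> complex) \<Rightarrow> real \<Rightarrow>
    (real \<Rightarrow> real) \<Rightarrow> (real \<Rightarrow> real) \<Rightarrow> (nat \<Rightarrow> complex) \<Rightarrow> (nat \<Rightarrow> complex) \<Rightarrow> real" where
  "modified_energy d \<omega> A h \<psi>1 \<phi> q p = (vnorm d p)\<^sup>2 / 2 + (vnorm d (Omul \<omega> q))\<^sup>2 / 2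
     + rinner d q (dmul cos h \<omega> (filtered_op d \<omega> A h \<phi> q)) / 2
     - h\<^sup>2 / 8 * (vnorm d (force d \<omega> A h \<psi>1 \<phi> q))\<^sup>2"

lemma sinc_mult: "x * sinc x = sin x"
  unfolding sinc_def by auto

lemma rotation_preserves_norm:
  fixes s c :: real and u v :: complex
  assumes "s\<^sup>2 + c\<^sup>2 = 1"
  shows "(cmod (of_real c * u - of_real s * v))\<^sup>2 + (cmod (of_real s * u + of_real c * v))\<^sup>2
    = (cmod u)\<^sup>2 + (cmod v)\<^sup>2"
proof -
  have "(cmod (of_real c * u - of_real s * v))\<^sup>2 + (cmod (of_real s * u + of_real c * v))\<^sup>2
      = (s\<^sup>2 + c\<^sup>2) * ((cmod u)\<^sup>2 + (cmod v)\<^sup>2)"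
    unfolding cmod_power2 by (simp add: power2_eq_square algebra_simps)
  then show ?thesis using assms by simp
qed

lemma oscillator_step_energy:
  "(vnorm d (\<lambda>i. - Omul \<omega> (dmul sin h \<omega> q) i + dmul cos h \<omega> P i))\<^sup>2
   + (vnorm d (Omul \<omega> (\<lambda>i. dmul cos h \<omega> q i + of_real h * dmul sinc h \<omega> P i)))\<^sup>2
   = (vnorm d P)\<^sup>2 + (vnorm d (Omul \<omega> q))\<^sup>2"
  unfolding vnorm_square sum.distrib[symmetric]
proof (rule sum.cong[OF refl])
  fix i
  define x where "x = h * \<omega> i"
  have "- Omul \<omega> (dmul sin h \<omega> q) i + dmul cos h \<omega> P i
      = of_real (cos x) * P i - of_real (sin x) * Omul \<omega> q i"
    unfolding Omul_def dmul_def x_def by (simp add: algebra_simps)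
  moreover have "Omul \<omega> (\<lambda>i. dmul cos h \<omega> q i + of_real h * dmul sinc h \<omega> P i) i
      = of_real (x * sinc x) * P i + of_real (cos x) * Omul \<omega> q i"
    unfolding Omul_def dmul_def x_def by (simp add: algebra_simps)
  ultimately show "(cmod (- Omul \<omega> (dmul sin h \<omega> q) i + dmul cos h \<omega> P i))\<^sup>2
      + (cmod (Omul \<omega> (\<lambda>i. dmul cos h \<omega> q i + of_real h * dmul sinc h \<omega> P i) i))\<^sup>2
      = (cmod (P i))\<^sup>2 + (cmod (Omul \<omega> q i))\<^sup>2"
    unfolding sinc_mult by (simp only: rotation_preserves_norm[OF sin_cos_squared_add])
qed

lemma vnorm_square_add_scaled:
  "(vnorm d (\<lambda>i. x i + of_real a * y i))\<^sup>2
   = (vnorm d x)\<^sup>2 + 2 * a * rinner d x y + a\<^sup>2 * (vnorm d y)\<^sup>2"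
  unfolding vnorm_square_rinner rinner_add_left rinner_add_right rinner_scale_left rinner_scale_right
  using rinner_commute[of d x y] by (simp add: power2_eq_square algebra_simps)

lemma modified_energy_before_rotation:
  assumes sa: "self_adjoint d A" and psi: "\<forall>\<xi>. \<psi>1 \<xi> = sinc \<xi> * \<phi> \<xi>"
  shows "modified_energy d \<omega> A h \<psi>1 \<phi> q (\<lambda>i. P i + of_real (h / 2) * force d \<omega> A h \<psi>1 \<phi> q i)
    = ((vnorm d P)\<^sup>2 + (vnorm d (Omul \<omega> q))\<^sup>2
       + rinner d q (filtered_op d \<omega> A h \<phi> (\<lambda>i. dmul cos h \<omega> q i + of_real h * dmul sinc h \<omega> P i))) / 2"
proof -
  let ?B = "filtered_op d \<omega> A h \<phi>" and ?F = "force d \<omega> A h \<psi>1 \<phi>"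
  have kick: "h * rinner d P (?F q) = rinner d q (?B (\<lambda>i. of_real h * dmul sinc h \<omega> P i))"
  proof -
    have "h * rinner d P (?F q) = rinner d (\<lambda>i. of_real h * dmul sinc h \<omega> P i) (?B q)"
      unfolding force_eq_dmul_sinc[OF psi] rinner_scale_left rinner_dmul ..
    also have "\<dots> = rinner d (?B (\<lambda>i. of_real h * dmul sinc h \<omega> P i)) q"
      by (rule rinner_filtered_op[OF sa])
    also have "\<dots> = rinner d q (?B (\<lambda>i. of_real h * dmul sinc h \<omega> P i))"
      by (rule rinner_commute)
    finally show ?thesis .
  qed
  have "rinner d q (dmul cos h \<omega> (?B q)) = rinner d (dmul cos h \<omega> q) (?B q)"
    by (rule rinner_dmul[symmetric])
  also have "\<dots> = rinner d (?B (dmul cos h \<omega> q)) q"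
    by (rule rinner_filtered_op[OF sa])
  also have "\<dots> = rinner d q (?B (dmul cos h \<omega> q))"
    by (rule rinner_commute)
  finally show ?thesis using kick
    unfolding modified_energy_def vnorm_square_add_scaled filtered_op_add rinner_add_right
    by (simp add: power2_eq_square field_simps)
qed

lemma modified_energy_after_rotation:
  fixes \<omega> :: "nat \<Rightarrow> real" and h :: real and q P :: "nat \<Rightarrow> complex"
  assumes sa: "self_adjoint d A" and psi: "\<forall>\<xi>. \<psi>1 \<xi> = sinc \<xi> * \<phi> \<xi>"
  defines "q' \<equiv> \<lambda>i. dmul cos h \<omega> q i + of_real h * dmul sinc h \<omega> P i"
    and "P' \<equiv> \<lambda>i. - Omul \<omega> (dmul sin h \<omega> q) i + dmul cos h \<omega> P i"
  shows "modified_energy d \<omega> A h \<psi>1 \<phi> q' (\<lambda>i. P' i - of_real (h / 2) * force d \<omega> A h \<psi>1 \<phi> q' i)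
    = ((vnorm d P')\<^sup>2 + (vnorm d (Omul \<omega> q'))\<^sup>2 + rinner d q (filtered_op d \<omega> A h \<phi> q')) / 2"
proof -
  let ?B = "filtered_op d \<omega> A h \<phi>" and ?F = "force d \<omega> A h \<psi>1 \<phi>"
  have inverse_rotation: "(\<lambda>i. dmul cos h \<omega> q' i - of_real h * dmul sinc h \<omega> P' i) = q"
  proof
    fix i
    define x where "x = h * \<omega> i"
    have "dmul cos h \<omega> q' i - of_real h * dmul sinc h \<omega> P' i
        = of_real ((cos x)\<^sup>2 + (x * sinc x) * sin x) * q i"
      unfolding q'_def P'_def dmul_def Omul_def x_def by (simp add: algebra_simps power2_eq_square)
    then show "dmul cos h \<omega> q' i - of_real h * dmul sinc h \<omega> P' i = q i"
      unfolding sinc_mult by (simp add: power2_eq_square[symmetric])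
  qed
  have "rinner d q' (dmul cos h \<omega> (?B q')) - h * rinner d P' (?F q')
      = rinner d (dmul cos h \<omega> q') (?B q') - rinner d (\<lambda>i. of_real h * dmul sinc h \<omega> P' i) (?B q')"
    unfolding force_eq_dmul_sinc[OF psi] rinner_scale_left rinner_dmul ..
  also have "\<dots> = rinner d q (?B q')"
    unfolding rinner_diff_left[symmetric] inverse_rotation ..
  finally have cross: "rinner d q' (dmul cos h \<omega> (?B q')) - h * rinner d P' (?F q') = rinner d q (?B q')" .
  have half_kick: "(\<lambda>i. P' i - of_real (h / 2) * ?F q' i) = (\<lambda>i. P' i + of_real (- (h / 2)) * ?F q' i)"
    by simp
  show ?thesis
    unfolding modified_energy_def half_kick vnorm_square_add_scaled using cross
    by (simp add: power2_eq_square field_simps)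
qed

lemma modified_energy_step:
  fixes \<omega> :: "nat \<Rightarrow> real" and h :: real and q p :: "nat \<Rightarrow> complex"
  assumes sa: "self_adjoint d A" and psi: "\<forall>\<xi>. \<psi>1 \<xi> = sinc \<xi> * \<phi> \<xi>"
  defines "F \<equiv> force d \<omega> A h \<psi>1 \<phi>"
  defines "q' \<equiv> \<lambda>i. dmul cos h \<omega> q i + of_real h * dmul sinc h \<omega> p i
                    - of_real (h\<^sup>2 / 2) * dmul sinc h \<omega> (F q) i"
  defines "p' \<equiv> \<lambda>i. - Omul \<omega> (dmul sin h \<omega> q) i + dmul cos h \<omega> p i
                    - of_real (h / 2) * (dmul cos h \<omega> (F q) i + F q' i)"
  shows "modified_energy d \<omega> A h \<psi>1 \<phi> q' p' = modified_energy d \<omega> A h \<psi>1 \<phi> q p"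
proof -
  define P where "P = (\<lambda>i. p i - of_real (h / 2) * F q i)"
  define P' where "P' = (\<lambda>i. - Omul \<omega> (dmul sin h \<omega> q) i + dmul cos h \<omega> P i)"
  have p: "p = (\<lambda>i. P i + of_real (h / 2) * F q i)"
    unfolding P_def by simp
  have q': "q' = (\<lambda>i. dmul cos h \<omega> q i + of_real h * dmul sinc h \<omega> P i)"
    unfolding q'_def P_def dmul_def by (simp add: fun_eq_iff algebra_simps power2_eq_square)
  have p': "p' = (\<lambda>i. P' i - of_real (h / 2) * F q' i)"
    unfolding p'_def P'_def P_def dmul_def by (simp add: fun_eq_iff algebra_simps)
  show ?thesis
    unfolding p' F_def q' P'_def
    unfolding modified_energy_after_rotation[OF sa psi] oscillator_step_energy
    unfolding p F_def modified_energy_before_rotation[OF sa psi] ..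
qed

lemma modified_energy_traj:
  assumes "self_adjoint d A" and "\<forall>\<xi>. \<psi>1 \<xi> = sinc \<xi> * \<phi> \<xi>"
  shows "modified_energy d \<omega> A h \<psi>1 \<phi> (fst (traj d \<omega> A h \<psi>1 \<phi> q0 p0 n)) (snd (traj d \<omega> A h \<psi>1 \<phi> q0 p0 n))
       = modified_energy d \<omega> A h \<psi>1 \<phi> q0 p0"
proof (induction n)
  case 0
  then show ?case by simp
next
  case (Suc n)
  obtain q p where "traj d \<omega> A h \<psi>1 \<phi> q0 p0 n = (q, p)" by fastforce
  then show ?case
    using Suc modified_energy_step[OF assms, where q = q and p = p] by (simp add: Let_def)
qed

section \<open>Energy versus modified energy\<close>

definition real_energy :: "nat \<Rightarrow> (nat \<Rightarrow> real) \<Rightarrow> (nat \<Rightarrow> nat \<Rightarrow> complex) \<Rightarrow>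
    (nat \<Rightarrow> complex) \<Rightarrow> (nat \<Rightarrow> complex) \<Rightarrow> real" where
  "real_energy d \<omega> A q p = (vnorm d (Omul \<omega> q))\<^sup>2 / 2 + (vnorm d p)\<^sup>2 / 2 + rinner d q (mvec d A q) / 2"

lemma energy_eq_real_energy:
  assumes "self_adjoint d A"
  shows "energy d \<omega> A q p = of_real (real_energy d \<omega> A q p)"
proof -
  have sum: "(\<Sum>i<d. \<Sum>j<d. cnj (q i) * A i j * q j) = cinner d q (mvec d A q)"
    by (simp add: cinner_def mvec_def sum_distrib_left mult.assoc)
  have "cnj (cinner d q (mvec d A q)) = cinner d q (mvec d A q)"
    using cinner_commute[of d "mvec d A q" q] cinner_mvec[OF assms, of q q] by simp
  then have "cinner d q (mvec d A q) = of_real (rinner d q (mvec d A q))"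
    unfolding rinner_def by (simp add: complex_eq_iff)
  then show ?thesis unfolding energy_def real_energy_def sum by simp
qed

lemma abs_one_minus_cos_le: "\<bar>1 - cos x\<bar> \<le> \<bar>x :: real\<bar>"
proof -
  have "1 - cos x = 2 * (sin (x / 2))\<^sup>2"
    using cos_double_sin[of "x / 2"] by simp
  also have "\<dots> = 2 * (\<bar>sin (x / 2)\<bar> * \<bar>sin (x / 2)\<bar>)"
    by (simp add: power2_eq_square)
  also have "\<dots> \<le> 2 * (\<bar>sin (x / 2)\<bar> * 1)"
    by (intro mult_left_mono abs_sin_le_one) simp_all
  also have "\<dots> \<le> \<bar>x\<bar>"
    using abs_sin_x_le_abs_x[of "x / 2"] by simp
  finally show ?thesis by simp
qed

lemma abs_one_minus_filter_le:
  fixes x a \<gamma> c0 c1 :: real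
  assumes "0 \<le> x" and "\<bar>a\<bar> \<le> c0" and "\<bar>a - 1\<bar> \<le> c1 * x" and "\<bar>1 - \<gamma>\<bar> \<le> x" and "\<bar>\<gamma>\<bar> \<le> 1"
  shows "\<bar>1 - a * \<gamma>\<bar> \<le> (1 + c0 + c1) * min x 1"
proof -
  have c0: "0 \<le> c0" using assms(2) by linarith
  have "\<bar>a * (1 - \<gamma>)\<bar> \<le> c0 * x"
    unfolding abs_mult using assms c0 by (intro mult_mono) auto
  then have small: "\<bar>1 - a * \<gamma>\<bar> \<le> (c0 + c1) * x"
    using assms(3) by (simp add: abs_le_iff algebra_simps)
  have "\<bar>a * \<gamma>\<bar> \<le> c0 * 1"
    unfolding abs_mult using assms c0 by (intro mult_mono) auto
  then have bounded: "\<bar>1 - a * \<gamma>\<bar> \<le> 1 + c0"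
    by (simp add: abs_le_iff)
  show ?thesis
  proof (cases "x \<le> 1")
    case True
    have "(c0 + c1) * x \<le> (1 + c0 + c1) * x" using assms(1) by (simp add: mult_right_mono)
    then show ?thesis using small True by (simp add: min_def)
  next
    case False
    have "0 \<le> c1 * x" using assms(3) by (metis abs_ge_zero order_trans)
    then have "0 \<le> c1" using False by (simp add: zero_le_mult_iff)
    then show ?thesis using False bounded by (simp add: min_def)
  qed
qed

lemma Min_pos_freq:
  fixes \<omega> :: "nat \<Rightarrow> real"
  assumes "i < d" and "0 < \<omega> i"
  shows "0 < Min {\<omega> j | j. j < d \<and> 0 < \<omega> j}" and "Min {\<omega> j | j. j < d \<and> 0 < \<omega> j} \<le> \<omega> i"
proof -
  let ?S = "{\<omega> j | j. j < d \<and> 0 < \<omega> j}"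
  have "?S \<subseteq> \<omega> ` {..<d}" by auto
  then have fin: "finite ?S" using finite_subset by blast
  have mem: "\<omega> i \<in> ?S" using assms by blast
  show "Min ?S \<le> \<omega> i" using Min_le[OF fin mem] .
  have "?S \<noteq> {}" using mem by blast
  then show "0 < Min ?S" using Min_in[OF fin] by auto
qed

lemma inv_min_freq_nonneg: "0 \<le> inv_min_freq d \<omega>"
  unfolding inv_min_freq_def using Min_pos_freq(1) by (auto intro: less_imp_le)

lemma min_le_inv_min_freq:
  assumes "i < d" and "0 \<le> \<omega> i"
  shows "min (h * \<omega> i) 1 \<le> min h (inv_min_freq d \<omega>) * \<omega> i"
proof (cases "\<omega> i = 0")
  case False
  let ?M = "Min {\<omega> j | j. j < d \<and> 0 < \<omega> j}"
  have pos: "0 < \<omega> i" using assms(2) False by simp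
  then have inv: "inv_min_freq d \<omega> = 1 / ?M" unfolding inv_min_freq_def using assms(1) by auto
  have "1 \<le> \<omega> i / ?M" using Min_pos_freq[of i d \<omega>, OF assms(1) pos] by simp
  show ?thesis
  proof (cases "h \<le> 1 / ?M")
    case True
    then show ?thesis unfolding inv by (simp add: min_def)
  next
    case False
    then have "min h (inv_min_freq d \<omega>) * \<omega> i = \<omega> i / ?M" unfolding inv by (simp add: min_def)
    then show ?thesis using \<open>1 \<le> \<omega> i / ?M\<close> by linarith
  qed
qed simp

lemma vnorm_filter_defect_le:
  assumes "\<forall>j<d. 0 \<le> \<omega> j" and "0 \<le> h" and "0 \<le> K"
    and "\<And>i. i < d \<Longrightarrow> \<bar>1 - f (h * \<omega> i)\<bar> \<le> K * min (h * \<omega> i) 1"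
  shows "vnorm d (\<lambda>i. q i - dmul f h \<omega> q i) \<le> K * min h (inv_min_freq d \<omega>) * vnorm d (Omul \<omega> q)"
proof (rule vnorm_le_pointwise)
  show "0 \<le> K * min h (inv_min_freq d \<omega>)"
    using assms(2,3) inv_min_freq_nonneg[of d \<omega>] by simp
  fix i assume i: "i < d"
  have "q i - dmul f h \<omega> q i = of_real (1 - f (h * \<omega> i)) * q i"
    unfolding dmul_def by (simp add: algebra_simps)
  then have "cmod (q i - dmul f h \<omega> q i) = \<bar>1 - f (h * \<omega> i)\<bar> * cmod (q i)"
    by (simp only: norm_mult norm_of_real)
  also have "\<dots> \<le> K * (min h (inv_min_freq d \<omega>) * \<omega> i) * cmod (q i)"
  proof (rule mult_right_mono)
    have "K * min (h * \<omega> i) 1 \<le> K * (min h (inv_min_freq d \<omega>) * \<omega> i)"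
      using assms(1,3) i by (intro mult_left_mono min_le_inv_min_freq) auto
    then show "\<bar>1 - f (h * \<omega> i)\<bar> \<le> K * (min h (inv_min_freq d \<omega>) * \<omega> i)"
      using assms(4)[OF i] by linarith
  qed simp
  also have "\<dots> = K * min h (inv_min_freq d \<omega>) * cmod (Omul \<omega> q i)"
    unfolding Omul_def norm_mult using assms(1) i by simp
  finally show "cmod (q i - dmul f h \<omega> q i) \<le> K * min h (inv_min_freq d \<omega>) * cmod (Omul \<omega> q i)" .
qed

lemma dmul_dmul: "dmul f h \<omega> (dmul g h \<omega> x) = dmul (\<lambda>\<xi>. f \<xi> * g \<xi>) h \<omega> x"
  unfolding dmul_def by (simp add: fun_eq_iff)

lemma abs_rinner_cos_filtered_op_le:
  assumes "\<forall>\<xi>. \<bar>\<phi> \<xi>\<bar> \<le> c0"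
  shows "\<bar>rinner d q (dmul cos h \<omega> (filtered_op d \<omega> A h \<phi> q))\<bar> \<le> c0\<^sup>2 * opnorm d A * (vnorm d q)\<^sup>2"
proof -
  have "\<bar>rinner d q (dmul cos h \<omega> (filtered_op d \<omega> A h \<phi> q))\<bar>
      \<le> vnorm d q * vnorm d (dmul cos h \<omega> (filtered_op d \<omega> A h \<phi> q))"
    by (rule rinner_Cauchy_Schwarz)
  also have "\<dots> \<le> vnorm d q * (1 * vnorm d (filtered_op d \<omega> A h \<phi> q))"
    by (intro mult_left_mono vnorm_nonneg vnorm_dmul_le) auto
  also have "\<dots> \<le> vnorm d q * (c0 * opnorm d A * c0 * vnorm d q)"
    unfolding filtered_op_def using assms
    by (intro mult_left_mono vnorm_nonneg) (simp add: vnorm_dmul_mvec_dmul_le)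
  finally show ?thesis by (simp add: power2_eq_square algebra_simps)
qed

lemma vnorm_force_square_le:
  assumes "\<forall>\<xi>. \<bar>\<psi>1 \<xi>\<bar> \<le> c0" and "\<forall>\<xi>. \<bar>\<phi> \<xi>\<bar> \<le> c0"
  shows "(vnorm d (force d \<omega> A h \<psi>1 \<phi> q))\<^sup>2 \<le> c0 ^ 4 * (opnorm d A)\<^sup>2 * (vnorm d q)\<^sup>2"
proof -
  have "vnorm d (force d \<omega> A h \<psi>1 \<phi> q) \<le> c0 * opnorm d A * c0 * vnorm d q"
    unfolding force_def using assms by (simp add: vnorm_dmul_mvec_dmul_le)
  then have "(vnorm d (force d \<omega> A h \<psi>1 \<phi> q))\<^sup>2 \<le> (c0 * opnorm d A * c0 * vnorm d q)\<^sup>2"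
    by (rule power_mono[OF _ vnorm_nonneg])
  then show ?thesis by (simp add: power_mult_distrib power2_eq_square power4_eq_xxxx algebra_simps)
qed

lemma filter_lipschitz_const_nonneg:
  fixes \<phi> :: "real \<Rightarrow> real"
  assumes "\<forall>\<xi>. \<bar>\<phi> \<xi> - 1\<bar> \<le> c1 * \<bar>\<xi>\<bar>"
  shows "0 \<le> c1"
  using assms by (metis abs_ge_zero abs_one mult.right_neutral order_trans)

lemma vnorm_filter_defects_le:
  assumes w: "\<forall>j<d. 0 \<le> \<omega> j" and h: "0 \<le> h"
    and b0: "\<forall>\<xi>. \<bar>\<phi> \<xi>\<bar> \<le> c0" and b1: "\<forall>\<xi>. \<bar>\<phi> \<xi> - 1\<bar> \<le> c1 * \<bar>\<xi>\<bar>"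
  shows "vnorm d (\<lambda>i. q i - dmul (\<lambda>\<xi>. \<phi> \<xi> * cos \<xi>) h \<omega> q i)
      \<le> (1 + c0 + c1) * min h (inv_min_freq d \<omega>) * vnorm d (Omul \<omega> q)"
    and "vnorm d (\<lambda>i. q i - dmul \<phi> h \<omega> q i)
      \<le> (1 + c0 + c1) * min h (inv_min_freq d \<omega>) * vnorm d (Omul \<omega> q)"
proof -
  have "0 \<le> c0" using b0 by (metis abs_ge_zero order_trans)
  then have K: "0 \<le> 1 + c0 + c1" using filter_lipschitz_const_nonneg[OF b1] by simp
  have filter: "\<bar>1 - \<phi> (h * \<omega> i) * \<gamma>\<bar> \<le> (1 + c0 + c1) * min (h * \<omega> i) 1"
    if "i < d" and "\<bar>1 - \<gamma>\<bar> \<le> h * \<omega> i" and "\<bar>\<gamma>\<bar> \<le> 1" for i \<gamma>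
  proof -
    have x: "0 \<le> h * \<omega> i" using w h that(1) by simp
    then have "\<bar>\<phi> (h * \<omega> i) - 1\<bar> \<le> c1 * (h * \<omega> i)"
      using b1[rule_format, of "h * \<omega> i"] by simp
    then show ?thesis by (rule abs_one_minus_filter_le[OF x b0[rule_format] _ that(2,3)])
  qed
  show "vnorm d (\<lambda>i. q i - dmul (\<lambda>\<xi>. \<phi> \<xi> * cos \<xi>) h \<omega> q i)
      \<le> (1 + c0 + c1) * min h (inv_min_freq d \<omega>) * vnorm d (Omul \<omega> q)"
  proof (rule vnorm_filter_defect_le[OF w h K])
    fix i assume "i < d"
    moreover have "\<bar>1 - cos (h * \<omega> i)\<bar> \<le> h * \<omega> i"
      using abs_one_minus_cos_le[of "h * \<omega> i"] w h \<open>i < d\<close> by simp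
    ultimately show "\<bar>1 - \<phi> (h * \<omega> i) * cos (h * \<omega> i)\<bar> \<le> (1 + c0 + c1) * min (h * \<omega> i) 1"
      by (intro filter) auto
  qed
  show "vnorm d (\<lambda>i. q i - dmul \<phi> h \<omega> q i)
      \<le> (1 + c0 + c1) * min h (inv_min_freq d \<omega>) * vnorm d (Omul \<omega> q)"
  proof (rule vnorm_filter_defect_le[OF w h K])
    fix i assume "i < d"
    then show "\<bar>1 - \<phi> (h * \<omega> i)\<bar> \<le> (1 + c0 + c1) * min (h * \<omega> i) 1"
      using filter[of i 1] w h by simp
  qed
qed

lemma real_energy_minus_modified_energy:
  fixes \<phi> :: "real \<Rightarrow> real" and h :: real and \<omega> :: "nat \<Rightarrow> real" and q :: "nat \<Rightarrow> complex"
  defines "g \<equiv> dmul (\<lambda>\<xi>. \<phi> \<xi> * cos \<xi>) h \<omega> q" and "f \<equiv> dmul \<phi> h \<omega> q"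
  shows "real_energy d \<omega> A q p - modified_energy d \<omega> A h \<psi>1 \<phi> q p
    = (rinner d (\<lambda>i. q i - g i) (mvec d A q) + rinner d g (mvec d A (\<lambda>i. q i - f i))) / 2
      + h\<^sup>2 / 8 * (vnorm d (force d \<omega> A h \<psi>1 \<phi> q))\<^sup>2"
proof -
  have "rinner d q (dmul cos h \<omega> (filtered_op d \<omega> A h \<phi> q)) = rinner d g (mvec d A f)"
    unfolding g_def f_def filtered_op_def by (simp only: rinner_dmul[symmetric] dmul_dmul mult.commute)
  then show ?thesis
    unfolding real_energy_def modified_energy_def rinner_diff_left rinner_diff_right mvec_diff
    by (simp add: field_simps)
qed

lemma real_energy_modified_energy_diff_le:
  assumes w: "\<forall>j<d. 0 \<le> \<omega> j" and h: "0 \<le> h"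
    and bp: "\<forall>\<xi>. \<bar>\<psi>1 \<xi>\<bar> \<le> c0" and b0: "\<forall>\<xi>. \<bar>\<phi> \<xi>\<bar> \<le> c0"
    and b1: "\<forall>\<xi>. \<bar>\<phi> \<xi> - 1\<bar> \<le> c1 * \<bar>\<xi>\<bar>"
  shows "\<bar>real_energy d \<omega> A q p - modified_energy d \<omega> A h \<psi>1 \<phi> q p\<bar>
    \<le> (1 + c0) * (1 + c0 + c1) * opnorm d A * vnorm d q * vnorm d (Omul \<omega> q) / 2 * min h (inv_min_freq d \<omega>)
      + c0 ^ 4 * (opnorm d A)\<^sup>2 * (vnorm d q)\<^sup>2 / 8 * h\<^sup>2"
proof -
  define a where "a = opnorm d A"
  define e where "e = (1 + c0 + c1) * min h (inv_min_freq d \<omega>) * vnorm d (Omul \<omega> q)"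
  define nq where "nq = vnorm d q"
  define g where "g = dmul (\<lambda>\<xi>. \<phi> \<xi> * cos \<xi>) h \<omega> q"
  define f where "f = dmul \<phi> h \<omega> q"
  have c0: "0 \<le> c0" using b0 by (metis abs_ge_zero order_trans)
  have g: "vnorm d g \<le> c0 * nq"
    unfolding g_def nq_def
  proof (rule vnorm_dmul_le)
    fix \<xi> show "\<bar>\<phi> \<xi> * cos \<xi>\<bar> \<le> c0"
      using mult_mono[OF b0[rule_format, of \<xi>] abs_cos_le_one[of \<xi>]] c0 by (simp add: abs_mult)
  qed
  have t1: "\<bar>rinner d (\<lambda>i. q i - g i) (mvec d A q)\<bar> \<le> e * (a * nq)"
    using abs_rinner_mvec_le[of d "\<lambda>i. q i - g i" A q] vnorm_filter_defects_le(1)[OF w h b0 b1, of q]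
      mult_right_mono[OF _ mult_nonneg_nonneg[OF opnorm_nonneg vnorm_nonneg]]
    unfolding a_def nq_def e_def g_def by (meson order_trans)
  have t2: "\<bar>rinner d g (mvec d A (\<lambda>i. q i - f i))\<bar> \<le> (c0 * nq) * (a * e)"
    using abs_rinner_mvec_le[of d g A "\<lambda>i. q i - f i"] vnorm_filter_defects_le(2)[OF w h b0 b1, of q] g
      c0 opnorm_nonneg[of d A] vnorm_nonneg[of d g] vnorm_nonneg[of d "\<lambda>i. q i - f i"]
    unfolding a_def nq_def e_def f_def by (smt (verit) mult_mono mult_left_mono mult_nonneg_nonneg)
  have triangle: "\<bar>(x + y) / 2 + z\<bar> \<le> (\<alpha> + \<beta>) / 2 + z'"
    if "\<bar>x\<bar> \<le> \<alpha>" "\<bar>y\<bar> \<le> \<beta>" "0 \<le> z" "z \<le> z'" for x y z z' \<alpha> \<beta> :: real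
    using that by (simp add: abs_le_iff field_simps)
  have "h\<^sup>2 / 8 * (vnorm d (force d \<omega> A h \<psi>1 \<phi> q))\<^sup>2 \<le> h\<^sup>2 / 8 * (c0 ^ 4 * a\<^sup>2 * nq\<^sup>2)"
    unfolding a_def nq_def by (intro mult_left_mono vnorm_force_square_le[OF bp b0]) simp
  then have "\<bar>real_energy d \<omega> A q p - modified_energy d \<omega> A h \<psi>1 \<phi> q p\<bar>
      \<le> (e * (a * nq) + (c0 * nq) * (a * e)) / 2 + h\<^sup>2 / 8 * (c0 ^ 4 * a\<^sup>2 * nq\<^sup>2)"
    unfolding real_energy_minus_modified_energy using t1 t2 unfolding g_def f_def
    by (intro triangle) auto
  then show ?thesis unfolding a_def e_def nq_def by (simp add: algebra_simps)
qed

lemma vnorm_Omul_square_le: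
  assumes conserved: "modified_energy d \<omega> A h \<psi>1 \<phi> q p = modified_energy d \<omega> A h \<psi>1 \<phi> q0 p0"
    and bp: "\<forall>\<xi>. \<bar>\<psi>1 \<xi>\<bar> \<le> c0" and b0: "\<forall>\<xi>. \<bar>\<phi> \<xi>\<bar> \<le> c0"
    and h: "0 \<le> h" "h \<le> 1"
  shows "(vnorm d (Omul \<omega> q))\<^sup>2 \<le> (vnorm d p0)\<^sup>2 + (vnorm d (Omul \<omega> q0))\<^sup>2
     + c0\<^sup>2 * opnorm d A * (vnorm d q0)\<^sup>2 + c0\<^sup>2 * opnorm d A * (vnorm d q)\<^sup>2
     + c0 ^ 4 * (opnorm d A)\<^sup>2 * (vnorm d q)\<^sup>2 / 4"
proof -
  let ?F = "force d \<omega> A h \<psi>1 \<phi>"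
  have "h\<^sup>2 * (vnorm d (?F q))\<^sup>2 \<le> 1 * (c0 ^ 4 * (opnorm d A)\<^sup>2 * (vnorm d q)\<^sup>2)"
    using h by (intro mult_mono vnorm_force_square_le[OF bp b0] power_le_one) auto
  moreover have "0 \<le> h\<^sup>2 * (vnorm d (?F q0))\<^sup>2" by simp
  ultimately show ?thesis
    using conserved zero_le_power2[of "vnorm d p"]
      abs_le_D2[OF abs_rinner_cos_filtered_op_le[OF b0, where q = q and d = d and \<omega> = \<omega> and A = A and h = h]]
      abs_le_D1[OF abs_rinner_cos_filtered_op_le[OF b0, where q = q0 and d = d and \<omega> = \<omega> and A = A and h = h]]
    unfolding modified_energy_def by linarith
qed

lemma real_energy_diff_le_of_modified_energy_eq:
  assumes conserved: "modified_energy d \<omega> A h \<psi>1 \<phi> q p = modified_energy d \<omega> A h \<psi>1 \<phi> q0 p0"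
    and w: "\<forall>j<d. 0 \<le> \<omega> j" and h: "0 \<le> h"
    and bp: "\<forall>\<xi>. \<bar>\<psi>1 \<xi>\<bar> \<le> c0" and b0: "\<forall>\<xi>. \<bar>\<phi> \<xi>\<bar> \<le> c0"
    and b1: "\<forall>\<xi>. \<bar>\<phi> \<xi> - 1\<bar> \<le> c1 * \<bar>\<xi>\<bar>"
  shows "\<bar>real_energy d \<omega> A q p - real_energy d \<omega> A q0 p0\<bar>
    \<le> (1 + c0) * (1 + c0 + c1) * opnorm d A
        * (vnorm d q * vnorm d (Omul \<omega> q) + vnorm d q0 * vnorm d (Omul \<omega> q0)) / 2 * min h (inv_min_freq d \<omega>)
      + c0 ^ 4 * (opnorm d A)\<^sup>2 * ((vnorm d q)\<^sup>2 + (vnorm d q0)\<^sup>2) / 8 * h\<^sup>2"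
  using conserved real_energy_modified_energy_diff_le[OF w h bp b0 b1, of A q p]
    real_energy_modified_energy_diff_le[OF w h bp b0 b1, of A q0 p0]
  by (simp add: abs_le_iff algebra_simps add_divide_distrib)

(* The square root is the bound on |Omega q_n| from vnorm_Omul_square_le. *)
definition energy_error_const :: "real \<Rightarrow> real \<Rightarrow> real \<Rightarrow> real \<Rightarrow> real \<Rightarrow> real \<Rightarrow> real \<Rightarrow> real" where
  "energy_error_const c0 c1 normA nq0 nOq0 np0 nqn =
     (1 + c0) * (1 + c0 + c1) * normA * (nqn * sqrt (np0\<^sup>2 + nOq0\<^sup>2 + c0\<^sup>2 * normA * nq0\<^sup>2
        + c0\<^sup>2 * normA * nqn\<^sup>2 + c0 ^ 4 * normA\<^sup>2 * nqn\<^sup>2 / 4) + nq0 * nOq0) / 2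
     + c0 ^ 4 * normA\<^sup>2 * (nqn\<^sup>2 + nq0\<^sup>2) / 8"

lemma energy_traj_error_le:
  assumes w: "\<forall>j<d. 0 \<le> \<omega> j" and sa: "self_adjoint d A" and h: "0 < h" "h \<le> 1"
    and psi: "\<forall>\<xi>. \<psi>1 \<xi> = sinc \<xi> * \<phi> \<xi>"
    and bp: "\<forall>\<xi>. \<bar>\<psi>1 \<xi>\<bar> \<le> c0" and b0: "\<forall>\<xi>. \<bar>\<phi> \<xi>\<bar> \<le> c0"
    and b1: "\<forall>\<xi>. \<bar>\<phi> \<xi> - 1\<bar> \<le> c1 * \<bar>\<xi>\<bar>"
    and traj: "traj d \<omega> A h \<psi>1 \<phi> q0 p0 n = (q, p)"
  defines "K \<equiv> energy_error_const c0 c1 (opnorm d A) (vnorm d q0) (vnorm d (Omul \<omega> q0)) (vnorm d p0) (vnorm d q)"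
  shows "cmod (energy d \<omega> A q p - energy d \<omega> A q0 p0) \<le> K * min h (inv_min_freq d \<omega>) + K * h\<^sup>2"
proof -
  define a where "a = opnorm d A"
  define m where "m = min h (inv_min_freq d \<omega>)"
  define C1 where "C1 = (1 + c0) * (1 + c0 + c1) * a"
  define W where "W = (vnorm d p0)\<^sup>2 + (vnorm d (Omul \<omega> q0))\<^sup>2 + c0\<^sup>2 * a * (vnorm d q0)\<^sup>2
    + c0\<^sup>2 * a * (vnorm d q)\<^sup>2 + c0 ^ 4 * a\<^sup>2 * (vnorm d q)\<^sup>2 / 4"
  define K1 where "K1 = C1 * (vnorm d q * sqrt W + vnorm d q0 * vnorm d (Omul \<omega> q0)) / 2"
  define K2 where "K2 = c0 ^ 4 * a\<^sup>2 * ((vnorm d q)\<^sup>2 + (vnorm d q0)\<^sup>2) / 8"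
  have "0 \<le> c0" using b0 by (metis abs_ge_zero order_trans)
  then have C1: "0 \<le> C1"
    unfolding C1_def a_def using filter_lipschitz_const_nonneg[OF b1] opnorm_nonneg by simp
  have m: "0 \<le> m" unfolding m_def using h inv_min_freq_nonneg[of d \<omega>] by simp
  have conserved: "modified_energy d \<omega> A h \<psi>1 \<phi> q p = modified_energy d \<omega> A h \<psi>1 \<phi> q0 p0"
    using modified_energy_traj[OF sa psi, of \<omega> h q0 p0 n] traj by simp
  have Omega_q: "vnorm d (Omul \<omega> q) \<le> sqrt W"
    unfolding W_def a_def
    by (rule real_le_rsqrt, rule vnorm_Omul_square_le[OF conserved bp b0]) (use h in auto)
  then have "C1 * (vnorm d q * vnorm d (Omul \<omega> q) + vnorm d q0 * vnorm d (Omul \<omega> q0)) / 2 * m \<le> K1 * m"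
    unfolding K1_def using C1 m
    by (intro mult_right_mono divide_right_mono mult_left_mono add_right_mono) (auto simp: vnorm_nonneg)
  then have "\<bar>real_energy d \<omega> A q p - real_energy d \<omega> A q0 p0\<bar> \<le> K1 * m + K2 * h\<^sup>2"
    using real_energy_diff_le_of_modified_energy_eq[OF conserved w _ bp b0 b1] h
    unfolding C1_def K2_def a_def m_def by simp
  also have "\<dots> \<le> K * m + K * h\<^sup>2"
  proof -
    have "0 \<le> sqrt W" using Omega_q vnorm_nonneg[of d "Omul \<omega> q"] by linarith
    then have "0 \<le> K1" unfolding K1_def using C1 by (simp add: vnorm_nonneg)
    moreover have "K = K1 + K2"
      unfolding K_def energy_error_const_def K1_def K2_def W_def C1_def a_def ..
    moreover have "0 \<le> K2" unfolding K2_def by simp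
    ultimately show ?thesis using m by (simp add: algebra_simps)
  qed
  finally show ?thesis
    unfolding energy_eq_real_energy[OF sa] of_real_diff[symmetric] norm_of_real m_def .
qed

theorem theorem4:
  shows "\<exists>C :: real \<Rightarrow> real \<Rightarrow> real \<Rightarrow> real \<Rightarrow> real \<Rightarrow> real \<Rightarrow> real \<Rightarrow> real.
    \<forall>(d::nat) (\<omega>::nat \<Rightarrow> real) (A::nat \<Rightarrow> nat \<Rightarrow> complex) (h::real)
      (\<psi>1::real \<Rightarrow> real) (\<phi>::real \<Rightarrow> real) (c0::real) (c1::real)
      (q0::nat \<Rightarrow> complex) (p0::nat \<Rightarrow> complex) (n::nat).
      d \<ge> 1 \<and> (\<forall>j<d. \<omega> j \<ge> 0) \<and> self_adjoint d A \<and> 0 < h \<and> h \<le> 1 \<and>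
      (\<forall>\<xi>. \<psi>1 (- \<xi>) = \<psi>1 \<xi>) \<and> (\<forall>\<xi>. \<phi> (- \<xi>) = \<phi> \<xi>) \<and>
      (\<forall>\<xi>. \<psi>1 \<xi> = sinc \<xi> * \<phi> \<xi>) \<and> c0 \<ge> 0 \<and> c1 \<ge> 0 \<and>
      (\<forall>\<xi>. \<bar>\<psi>1 \<xi>\<bar> \<le> c0) \<and> (\<forall>\<xi>. \<bar>\<phi> \<xi>\<bar> \<le> c0) \<and> (\<forall>\<xi>. \<bar>\<phi> \<xi> - 1\<bar> \<le> c1 * \<bar>\<xi>\<bar>)
      \<longrightarrow>
      (let (q, p) = traj d \<omega> A h \<psi>1 \<phi> q0 p0 n;
           K = C c0 c1 (opnorm d A) (vnorm d q0) (vnorm d (Omul \<omega> q0)) (vnorm d p0) (vnorm d q)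
       in cmod (energy d \<omega> A q p - energy d \<omega> A q0 p0)
            \<le> K * min h (inv_min_freq d \<omega>) + K * h\<^sup>2)"
  unfolding Let_def
  by (intro exI[of _ energy_error_const] allI impI, split prod.split, elim conjE)
    (intro allI impI, rule energy_traj_error_le; assumption)

end
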